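(* Let $X$ be a locally super-compact $L$-topological space. Then in the $L$-ordered set $({\rm pt}_L\mathcal O(X),{\rm sub}_{\mathcal O(X)})$, for every $x\in X$ the $L$-subset ${\Downarrow}[x]$ is directed and $[x]=\sqcup{\Downarrow}[x]$.
   Context: $L$ is a frame with implication $\to$. $L$-subsets: maps to $L$; nonempty: $\bigvee A=1$; ${\rm sub}_X(A,B)=\bigwedge_xA(x)\to B(x)$. $L$-topology: $\mathcal O(X)\subseteq L^X$ closed under finite meets and arbitrary joins containing all constants $a_X$; interior $A^\circ=\bigvee\{B\in\mathcal O(X):B\le A\}$. Super-compact: nonempty $A\in L^X$ with ${\rm sub}_X(A,\bigvee_iV_i)=\bigvee_i{\rm sub}_X(A,V_i)$ for every family of open $V_i$; ${\rm SC}(X)$ their set. Locally super-compact: each open $A=\bigvee_{B\in{\rm SC}(X)}{\rm sub}_X(B,A)\wedge B^\circ$. A point of $\mathcal O(X)$: $p:\mathcal O(X)\to L$ with $p(A\wedge B)=p(A)\wedge p(B)$, $p(\bigvee_iA_i)=\bigvee_ip(A_i)$, $p(\lambda_X)=\lambda$. ${\rm pt}_L\mathcal O(X)$ is the set of points, $L$-ordered by ${\rm sub}_{\mathcal O(X)}(p,q)=\bigwedge_{A\in\mathcal O(X)}p(A)\to q(A)$. $[x](A)=A(x)$. For an $L$-ordered set $(P,e)$: ${\downarrow}y(x)=e(x,y)$; $\sqcup A=x$ iff $e(x,y)={\rm sub}_P(A,{\downarrow}y)$ for all $y$; directed: nonempty and $D(x)\wedge D(y)\le\bigvee_zD(z)\wedge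 e(x,z)\wedge e(y,z)$; ideal: directed lower set ($I(x)\wedge e(y,x)\le I(y)$); ${\Downarrow}x(y)=\bigwedge\{e(x,\sqcup I)\to I(y):I\text{ ideal with a supremum}\}$. *)

theory Defs
  imports Main
begin

definition is_frame :: "('l::complete_lattice) itself \<Rightarrow> bool" where
  "is_frame _ \<longleftrightarrow> (\<forall>(a::'l) S. inf a (Sup S) = (SUP s\<in>S. inf a s))"

definition limp :: "'l::complete_lattice \<Rightarrow> 'l \<Rightarrow> 'l" where
  "limp a b = Sup {c. inf c a \<le> b}"

definition lsub :: "'p set \<Rightarrow> ('p \<Rightarrow> 'l::complete_lattice) \<Rightarrow> ('p \<Rightarrow> 'l) \<Rightarrow> 'l" where
  "lsub S A B = (INF x\<in>S. limp (A x) (B x))"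

definition ldown :: "('p \<Rightarrow> 'p \<Rightarrow> 'l) \<Rightarrow> 'p \<Rightarrow> ('p \<Rightarrow> 'l)" where
  "ldown e y = (\<lambda>x. e x y)"

definition is_lsup :: "'p set \<Rightarrow> ('p \<Rightarrow> 'p \<Rightarrow> 'l::complete_lattice) \<Rightarrow> ('p \<Rightarrow> 'l) \<Rightarrow> 'p \<Rightarrow> bool" where
  "is_lsup P e A s \<longleftrightarrow> s \<in> P \<and> (\<forall>y\<in>P. e s y = lsub P A (ldown e y))"

definition lnonempty :: "'p set \<Rightarrow> ('p \<Rightarrow> 'l::complete_lattice) \<Rightarrow> bool" where
  "lnonempty P A \<longleftrightarrow> (SUP x\<in>P. A x) = top"

definition ldirected :: "'p set \<Rightarrow> ('p \<Rightarrow> 'p \<Rightarrow> 'l::complete_lattice) \<Rightarrow> ('p \<Rightarrow> 'l) \<Rightarrow> bool" where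
  "ldirected P e D \<longleftrightarrow> lnonempty P D \<and>
     (\<forall>x\<in>P. \<forall>y\<in>P. inf (D x) (D y) \<le> (SUP z\<in>P. inf (inf (D z) (e x z)) (e y z)))"

definition llower :: "'p set \<Rightarrow> ('p \<Rightarrow> 'p \<Rightarrow> 'l::complete_lattice) \<Rightarrow> ('p \<Rightarrow> 'l) \<Rightarrow> bool" where
  "llower P e I \<longleftrightarrow> (\<forall>x\<in>P. \<forall>y\<in>P. inf (I x) (e y x) \<le> I y)"

definition lideal :: "'p set \<Rightarrow> ('p \<Rightarrow> 'p \<Rightarrow> 'l::complete_lattice) \<Rightarrow> ('p \<Rightarrow> 'l) \<Rightarrow> bool" where
  "lideal P e I \<longleftrightarrow> ldirected P e I \<and> llower P e I"

definition wbelow :: "'p set \<Rightarrow> ('p \<Rightarrow> 'p \<Rightarrow> 'l::complete_lattice) \<Rightarrow> 'p \<Rightarrow> ('p \<Rightarrow> 'l)" where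
  "wbelow P e x = (\<lambda>y. Inf {limp (e x s) (I y) | I s. lideal P e I \<and> is_lsup P e I s})"

text \<open>The space X is the whole type 'a; L-subsets are functions 'a => 'l (pointwise order).\<close>
definition is_Ltop :: "('a \<Rightarrow> 'l::complete_lattice) set \<Rightarrow> bool" where
  "is_Ltop T \<longleftrightarrow> (\<forall>A\<in>T. \<forall>B\<in>T. inf A B \<in> T) \<and> (\<forall>F\<subseteq>T. Sup F \<in> T) \<and> (\<forall>a. (\<lambda>_. a) \<in> T)"

definition linterior :: "('a \<Rightarrow> 'l::complete_lattice) set \<Rightarrow> ('a \<Rightarrow> 'l) \<Rightarrow> ('a \<Rightarrow> 'l)" where
  "linterior T A = Sup {B \<in> T. B \<le> A}"

definition super_compact :: "('a \<Rightarrow> 'l::complete_lattice) set \<Rightarrow> ('a \<Rightarrow> 'l) \<Rightarrow> bool" where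
  "super_compact T A \<longleftrightarrow> lnonempty UNIV A \<and>
     (\<forall>F\<subseteq>T. lsub UNIV A (Sup F) = (SUP V\<in>F. lsub UNIV A V))"

definition SC :: "('a \<Rightarrow> 'l::complete_lattice) set \<Rightarrow> ('a \<Rightarrow> 'l) set" where
  "SC T = {A. super_compact T A}"

definition locally_super_compact :: "('a \<Rightarrow> 'l::complete_lattice) set \<Rightarrow> bool" where
  "locally_super_compact T \<longleftrightarrow>
     (\<forall>A\<in>T. A = (SUP B\<in>SC T. (\<lambda>x. inf (lsub UNIV B A) (linterior T B x))))"

text \<open>Points are maps T(X) -> L; represented extensionally (value bot off T(X)).\<close>
definition is_lpoint :: "('a \<Rightarrow> 'l::complete_lattice) set \<Rightarrow> (('a \<Rightarrow> 'l) \<Rightarrow> 'l) \<Rightarrow> bool" where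
  "is_lpoint T p \<longleftrightarrow>
     (\<forall>A\<in>T. \<forall>B\<in>T. p (inf A B) = inf (p A) (p B)) \<and>
     (\<forall>F\<subseteq>T. p (Sup F) = (SUP A\<in>F. p A)) \<and>
     (\<forall>a. p (\<lambda>_. a) = a) \<and>
     (\<forall>A. A \<notin> T \<longrightarrow> p A = bot)"

definition ptL :: "('a \<Rightarrow> 'l::complete_lattice) set \<Rightarrow> (('a \<Rightarrow> 'l) \<Rightarrow> 'l) set" where
  "ptL T = {p. is_lpoint T p}"

definition subO :: "('a \<Rightarrow> 'l::complete_lattice) set \<Rightarrow> (('a \<Rightarrow> 'l) \<Rightarrow> 'l) \<Rightarrow> (('a \<Rightarrow> 'l) \<Rightarrow> 'l) \<Rightarrow> 'l" where
  "subO T p q = (INF A\<in>T. limp (p A) (q A))"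

definition ptx :: "('a \<Rightarrow> 'l::complete_lattice) set \<Rightarrow> 'a \<Rightarrow> (('a \<Rightarrow> 'l) \<Rightarrow> 'l)" where
  "ptx T x = (\<lambda>A. if A \<in> T then A x else bot)"

end

theory Submission
  imports Defs
begin

text \<open>
  For super-compact B the map q_B : A \<mapsto> sub(B, A) is a point (super-compactness says exactly
  that it preserves joins), and p(B\<degree>) \<le> sub(q_B, p) for every point p. Consequently every
  ideal of points whose supremum s satisfies sub([x], s) contains q_B to degree B\<degree>(x), that is,
  B\<degree>(x) \<le> \<Down>[x](q_B). Put J(p) = \<Or>{B\<degree>(x) \<and> sub(p, q_B) | B super-compact}.
  Suprema of directed sets of points are computed pointwise, A \<mapsto> \<Or>{I(p) \<and> p(A) | p a point},
  and local super-compactness makes J a directed lower set with supremum [x]. Being such an ideal,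
  J bounds \<Down>[x] from above; conversely \<Down>[x] is a lower set containing each q_B to degree
  B\<degree>(x). So \<Down>[x] = J, which is directed with supremum [x].
\<close>

lemma eq_by_lower_bounds:
  fixes a b :: "'a::order"
  assumes "\<And>c. c \<le> a \<longleftrightarrow> c \<le> b"
  shows "a = b"
  using assms by (metis order.antisym order.refl)

lemma ptL_inf: "p \<in> ptL T \<Longrightarrow> A \<in> T \<Longrightarrow> B \<in> T \<Longrightarrow> p (inf A B) = inf (p A) (p B)"
  unfolding ptL_def is_lpoint_def by blast

lemma ptL_Sup: "p \<in> ptL T \<Longrightarrow> G \<subseteq> T \<Longrightarrow> p (Sup G) = (SUP A\<in>G. p A)"
  unfolding ptL_def is_lpoint_def by blast

lemma ptL_const: "p \<in> ptL T \<Longrightarrow> p (\<lambda>_. a) = a"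
  unfolding ptL_def is_lpoint_def by blast

lemma ptL_apply_nonopen: "p \<in> ptL T \<Longrightarrow> A \<notin> T \<Longrightarrow> p A = bot"
  unfolding ptL_def is_lpoint_def by blast

lemma ptL_mono:
  assumes "p \<in> ptL T" "A \<in> T" "B \<in> T" "A \<le> B"
  shows "p A \<le> p B"
proof -
  have "p A = p (inf A B)" using assms(4) by (simp add: inf_absorb1)
  also have "\<dots> = inf (p A) (p B)" using ptL_inf[OF assms(1-3)] .
  finally show ?thesis by (metis inf.cobounded2)
qed

lemma Ltop_inf_closed: "is_Ltop T \<Longrightarrow> A \<in> T \<Longrightarrow> B \<in> T \<Longrightarrow> inf A B \<in> T"
  unfolding is_Ltop_def by blast

lemma Ltop_Sup_closed: "is_Ltop T \<Longrightarrow> G \<subseteq> T \<Longrightarrow> Sup G \<in> T"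
  unfolding is_Ltop_def by blast

lemma Ltop_const_open: "is_Ltop T \<Longrightarrow> (\<lambda>_. a) \<in> T"
  unfolding is_Ltop_def by blast

lemma linterior_open: "is_Ltop T \<Longrightarrow> linterior T B \<in> T"
  unfolding linterior_def by (rule Ltop_Sup_closed) auto

lemma linterior_le: "linterior T B \<le> B"
  unfolding linterior_def by (auto intro: Sup_least)

lemma locally_super_compact_apply:
  assumes "locally_super_compact T" and "A \<in> T"
  shows "A x = (SUP B\<in>SC T. inf (lsub UNIV B A) (linterior T B x))"
proof -
  have "A = (SUP B\<in>SC T. (\<lambda>x. inf (lsub UNIV B A) (linterior T B x)))"
    using assms unfolding locally_super_compact_def by blast
  from fun_cong[OF this, of x] show ?thesis by (simp only: SUP_apply)
qed

lemma ldirected_cong: "(\<And>p. p \<in> P \<Longrightarrow> D p = D' p) \<Longrightarrow> ldirected P e D = ldirected P e D'"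
  unfolding ldirected_def lnonempty_def by (simp cong: SUP_cong_simp)

lemma is_lsup_cong: "(\<And>p. p \<in> P \<Longrightarrow> D p = D' p) \<Longrightarrow> is_lsup P e D s = is_lsup P e D' s"
  unfolding is_lsup_def lsub_def by (simp cong: INF_cong_simp)

text \<open>In the notation of the proof idea, sc_point T B is q_B and approx_ideal T x is J.\<close>

definition pt_join :: "('a \<Rightarrow> 'l::complete_lattice) set \<Rightarrow> ((('a \<Rightarrow> 'l) \<Rightarrow> 'l) \<Rightarrow> 'l) \<Rightarrow> ('a \<Rightarrow> 'l) \<Rightarrow> 'l" where
  "pt_join T I = (\<lambda>A. SUP p\<in>ptL T. inf (I p) (p A))"

definition sc_point :: "('a \<Rightarrow> 'l::complete_lattice) set \<Rightarrow> ('a \<Rightarrow> 'l) \<Rightarrow> ('a \<Rightarrow> 'l) \<Rightarrow> 'l" where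
  "sc_point T B = (\<lambda>A. if A \<in> T then lsub UNIV B A else bot)"

definition approx_ideal :: "('a \<Rightarrow> 'l::complete_lattice) set \<Rightarrow> 'a \<Rightarrow> (('a \<Rightarrow> 'l) \<Rightarrow> 'l) \<Rightarrow> 'l" where
  "approx_ideal T x = (\<lambda>p. SUP B\<in>SC T. inf (linterior T B x) (subO T p (sc_point T B)))"

context
  assumes frame: "is_frame TYPE('l::complete_lattice)"
begin

lemma frame_inf_SUP_distrib: "inf (a::'l) (SUP i\<in>I. f i) = (SUP i\<in>I. inf a (f i))"
  using frame unfolding is_frame_def by (metis image_image)

lemma frame_SUP_inf_distrib: "inf (SUP i\<in>I. f i) (a::'l) = (SUP i\<in>I. inf (f i) a)"
  using frame_inf_SUP_distrib by (simp add: inf_commute)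

lemma le_limp_iff: "(c::'l) \<le> limp a b \<longleftrightarrow> inf c a \<le> b"
proof
  assume "c \<le> limp a b"
  then have "inf c a \<le> inf (limp a b) a" by (rule inf_mono) simp
  also have "\<dots> = (SUP d\<in>{d. inf d a \<le> b}. inf d a)"
    unfolding limp_def using frame_SUP_inf_distrib[of "\<lambda>d. d"] by simp
  also have "\<dots> \<le> b" by (rule SUP_least) simp
  finally show "inf c a \<le> b" .
next
  assume "inf c a \<le> b"
  then show "c \<le> limp a b" unfolding limp_def by (simp add: Sup_upper)
qed

lemma limp_top_left: "limp top (a::'l) = a"
  by (rule eq_by_lower_bounds) (simp add: le_limp_iff)

lemma le_lsub_iff: "(c::'l) \<le> lsub S A B \<longleftrightarrow> (\<forall>x\<in>S. inf c (A x) \<le> B x)"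
  by (simp add: lsub_def le_INF_iff le_limp_iff)

lemma lsub_apply_le: "x \<in> S \<Longrightarrow> inf (lsub S A B) (A x) \<le> (B x :: 'l)"
  using le_lsub_iff[of "lsub S A B" S A B] by simp

lemma lsub_inf: "lsub S B (inf A A') = inf (lsub S B A) (lsub S B (A' :: _ \<Rightarrow> 'l))"
  by (rule eq_by_lower_bounds) (auto simp: le_lsub_iff)

lemma lsub_const:
  assumes "lnonempty S B"
  shows "lsub S B (\<lambda>_. a) = (a::'l)"
proof (rule eq_by_lower_bounds)
  fix c
  have "c \<le> lsub S B (\<lambda>_. a) \<longleftrightarrow> (SUP x\<in>S. inf c (B x)) \<le> a"
    by (simp add: le_lsub_iff SUP_le_iff)
  also have "(SUP x\<in>S. inf c (B x)) = inf c (SUP x\<in>S. B x)" by (simp add: frame_inf_SUP_distrib)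
  also have "(SUP x\<in>S. B x) = top" using assms unfolding lnonempty_def .
  finally show "c \<le> lsub S B (\<lambda>_. a) \<longleftrightarrow> c \<le> a" by simp
qed

lemma le_subO_iff: "(c::'l) \<le> subO T p q \<longleftrightarrow> (\<forall>A\<in>T. inf c (p A) \<le> q A)"
  by (simp add: subO_def le_INF_iff le_limp_iff)

lemma subO_apply_le: "A \<in> T \<Longrightarrow> inf (subO T p q) (p A) \<le> (q A :: 'l)"
  using le_subO_iff[of "subO T p q" T p q] by simp

lemma subO_refl: "subO T p p = (top::'l)"
  using le_subO_iff[of top T p p] by (simp add: top_unique)

lemma subO_trans: "inf (subO T p q) (subO T q r) \<le> (subO T p r :: 'l)"
proof -
  have "inf (inf (subO T p q) (subO T q r)) (p A) \<le> r A" if "A \<in> T" for A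
  proof -
    have "inf (inf (subO T p q) (subO T q r)) (p A) \<le> inf (subO T q r) (inf (subO T p q) (p A))"
      by (simp add: inf_aci)
    also have "\<dots> \<le> inf (subO T q r) (q A)" using subO_apply_le[OF that] by (rule inf_mono[OF order_refl])
    also have "\<dots> \<le> r A" using subO_apply_le[OF that] .
    finally show ?thesis .
  qed
  then show ?thesis by (simp add: le_subO_iff)
qed



lemma llower_wbelow: "llower P e (wbelow P (e :: 'p \<Rightarrow> 'p \<Rightarrow> 'l) y)"
  unfolding llower_def
proof (intro ballI)
  fix u v assume u: "u \<in> P" and v: "v \<in> P"
  show "inf (wbelow P e y u) (e v u) \<le> wbelow P e y v"
    unfolding wbelow_def
  proof (rule Inf_greatest, clarify)
    fix I s assume I: "lideal P e I" and s: "is_lsup P e I s"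
    let ?W = "Inf {limp (e y s) (I u) |I s. lideal P e I \<and> is_lsup P e I s}"
    have "?W \<le> limp (e y s) (I u)" using I s by (intro Inf_lower) blast
    then have "inf ?W (e y s) \<le> I u" by (simp add: le_limp_iff)
    have "inf (inf ?W (e v u)) (e y s) = inf (inf ?W (e y s)) (e v u)" by (simp add: inf_aci)
    also have "\<dots> \<le> inf (I u) (e v u)" using \<open>inf ?W (e y s) \<le> I u\<close> by (rule inf_mono) simp
    also have "\<dots> \<le> I v" using I u v unfolding lideal_def llower_def by blast
    finally show "inf ?W (e v u) \<le> limp (e y s) (I v)" by (simp add: le_limp_iff)
  qed
qed

lemma inf_pair_le_pt_join_inf:
  assumes dir: "ldirected (ptL T) (subO T) I" and p: "p \<in> ptL T" and q: "q \<in> ptL T"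
    and A: "A \<in> T" and B: "B \<in> T"
  shows "inf (inf (I p) (p A)) (inf (I q) (q B)) \<le> pt_join T I (inf A (B :: 'a \<Rightarrow> 'l))"
proof -
  have "inf (inf (I p) (p A)) (inf (I q) (q B)) = inf (inf (I p) (I q)) (inf (p A) (q B))"
    by (simp add: inf_aci)
  also have "\<dots> \<le> inf (SUP z\<in>ptL T. inf (inf (I z) (subO T p z)) (subO T q z)) (inf (p A) (q B))"
    using dir p q unfolding ldirected_def by (blast intro: inf_mono)
  also have "\<dots> = (SUP z\<in>ptL T. inf (inf (inf (I z) (subO T p z)) (subO T q z)) (inf (p A) (q B)))"
    by (rule frame_SUP_inf_distrib)
  also have "\<dots> \<le> pt_join T I (inf A B)"
    unfolding pt_join_def
  proof (rule SUP_mono)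
    fix z assume z: "z \<in> ptL T"
    let ?M = "inf (inf (inf (I z) (subO T p z)) (subO T q z)) (inf (p A) (q B))"
    have M: "?M \<le> I z" "?M \<le> inf (subO T p z) (p A)" "?M \<le> inf (subO T q z) (q B)"
      by (simp_all add: inf.coboundedI1 inf.coboundedI2)
    have "?M \<le> inf (I z) (z (inf A B))"
      using M(1) order_trans[OF M(2) subO_apply_le[OF A]] order_trans[OF M(3) subO_apply_le[OF B]]
      by (simp add: ptL_inf[OF z A B])
    then show "\<exists>w\<in>ptL T. ?M \<le> inf (I w) (w (inf A B))" using z by blast
  qed
  finally show ?thesis .
qed

lemma pt_join_inf:
  assumes dir: "ldirected (ptL T) (subO T) I" and A: "A \<in> T" and B: "B \<in> T"
  shows "pt_join T I (inf A B) = inf (pt_join T I A) (pt_join T I (B :: 'a \<Rightarrow> 'l))"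
proof (rule order.antisym)
  have "inf (I p) (p (inf A B)) \<le> inf (I p) (p A)" "inf (I p) (p (inf A B)) \<le> inf (I p) (p B)"
    if "p \<in> ptL T" for p
    using ptL_inf[OF that A B] by (simp_all add: le_infI2)
  then show "pt_join T I (inf A B) \<le> inf (pt_join T I A) (pt_join T I B)"
    unfolding pt_join_def by (simp add: SUP_subset_mono)
next
  have "inf (pt_join T I A) (pt_join T I B)
      = (SUP p\<in>ptL T. SUP q\<in>ptL T. inf (inf (I p) (p A)) (inf (I q) (q B)))"
    unfolding pt_join_def by (simp add: frame_SUP_inf_distrib frame_inf_SUP_distrib) (rule SUP_commute)
  also have "\<dots> \<le> pt_join T I (inf A B)"
    using inf_pair_le_pt_join_inf[OF dir _ _ A B] by (intro SUP_least)
  finally show "inf (pt_join T I A) (pt_join T I B) \<le> pt_join T I (inf A B)" .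
qed

lemma pt_join_in_ptL:
  assumes dir: "ldirected (ptL T) (subO T) I"
  shows "pt_join T I \<in> ptL (T :: ('a \<Rightarrow> 'l) set)"
  unfolding ptL_def is_lpoint_def mem_Collect_eq
proof (intro conjI allI impI ballI)
  show "pt_join T I (inf A B) = inf (pt_join T I A) (pt_join T I B)" if "A \<in> T" "B \<in> T" for A B
    using pt_join_inf[OF dir that] .
  show "pt_join T I (Sup G) = (SUP A\<in>G. pt_join T I A)" if "G \<subseteq> T" for G
  proof -
    have "pt_join T I (Sup G) = (SUP p\<in>ptL T. inf (I p) (SUP A\<in>G. p A))"
      unfolding pt_join_def by (intro SUP_cong refl) (metis ptL_Sup that)
    also have "\<dots> = (SUP A\<in>G. SUP p\<in>ptL T. inf (I p) (p A))"
      by (simp add: frame_inf_SUP_distrib) (rule SUP_commute)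
    finally show ?thesis unfolding pt_join_def by simp
  qed
  show "pt_join T I (\<lambda>_. a) = a" for a
  proof -
    have "pt_join T I (\<lambda>_. a) = (SUP p\<in>ptL T. inf (I p) a)"
      unfolding pt_join_def by (intro SUP_cong refl) (metis ptL_const)
    also have "\<dots> = inf (SUP p\<in>ptL T. I p) a" by (simp add: frame_SUP_inf_distrib)
    also have "(SUP p\<in>ptL T. I p) = top" using dir unfolding ldirected_def lnonempty_def by blast
    finally show ?thesis by simp
  qed
  show "pt_join T I A = bot" if "A \<notin> T" for A
  proof -
    have "inf (I p) (p A) = bot" if "p \<in> ptL T" for p
      using ptL_apply_nonopen[OF that \<open>A \<notin> T\<close>] by simp
    then show ?thesis unfolding pt_join_def by (simp add: SUP_bot_conv)
  qed
qed

lemma pt_join_is_lsup: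
  assumes dir: "ldirected (ptL T) (subO T) I"
  shows "is_lsup (ptL T) (subO T) I (pt_join T (I :: (('a \<Rightarrow> 'l) \<Rightarrow> 'l) \<Rightarrow> 'l))"
  unfolding is_lsup_def
proof (intro conjI ballI pt_join_in_ptL[OF dir])
  fix q assume "q \<in> ptL T"
  show "subO T (pt_join T I) q = lsub (ptL T) I (ldown (subO T) q)"
  proof (rule eq_by_lower_bounds)
    fix c :: 'l
    have "c \<le> subO T (pt_join T I) q \<longleftrightarrow> (\<forall>A\<in>T. \<forall>p\<in>ptL T. inf c (inf (I p) (p A)) \<le> q A)"
      by (simp add: le_subO_iff pt_join_def frame_inf_SUP_distrib SUP_le_iff)
    also have "\<dots> \<longleftrightarrow> (\<forall>p\<in>ptL T. \<forall>A\<in>T. inf (inf c (I p)) (p A) \<le> q A)"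
      by (auto simp: inf_assoc)
    also have "\<dots> \<longleftrightarrow> c \<le> lsub (ptL T) I (ldown (subO T) q)"
      by (simp add: le_lsub_iff ldown_def le_subO_iff)
    finally show "c \<le> subO T (pt_join T I) q \<longleftrightarrow> c \<le> lsub (ptL T) I (ldown (subO T) q)" .
  qed
qed

lemma is_lsup_ptL_unique:
  assumes "is_lsup (ptL T) (subO T) I s" and "is_lsup (ptL T) (subO T) I s'"
  shows "s = (s' :: ('a \<Rightarrow> 'l) \<Rightarrow> 'l)"
proof -
  have le: "s A \<le> s' A"
    if s: "is_lsup (ptL T) (subO T) I s" and s': "is_lsup (ptL T) (subO T) I s'" and "A \<in> T"
    for s s' :: "('a \<Rightarrow> 'l) \<Rightarrow> 'l" and A
  proof -
    have "s' \<in> ptL T" using s' unfolding is_lsup_def by blast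
    then have "subO T s s' = subO T s' s'" using s s' unfolding is_lsup_def by simp
    then have "subO T s s' = top" by (simp add: subO_refl)
    then show ?thesis using subO_apply_le[OF \<open>A \<in> T\<close>, of s s'] by simp
  qed
  have "s \<in> ptL T" "s' \<in> ptL T" using assms unfolding is_lsup_def by blast+
  show ?thesis
  proof (rule ext)
    fix A
    show "s A = s' A"
    proof (cases "A \<in> T")
      case True
      then show ?thesis using le[OF assms] le[OF assms(2,1)] by (blast intro: order.antisym)
    next
      case False
      then show ?thesis
        using ptL_apply_nonopen[OF \<open>s \<in> ptL T\<close>] ptL_apply_nonopen[OF \<open>s' \<in> ptL T\<close>] by simp
    qed
  qed
qed

lemma lsub_le_subO_sc_point:
  assumes "A' \<le> B"
  shows "lsub UNIV C A' \<le> subO T (sc_point T B) (sc_point T (C :: 'a \<Rightarrow> 'l))"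
  unfolding le_subO_iff
proof
  fix A assume A: "A \<in> T"
  have "inf (inf (lsub UNIV C A') (lsub UNIV B A)) (C z) \<le> A z" for z
  proof -
    have "inf (inf (lsub UNIV C A') (lsub UNIV B A)) (C z) = inf (lsub UNIV B A) (inf (lsub UNIV C A') (C z))"
      by (simp add: inf_aci)
    also have "\<dots> \<le> inf (lsub UNIV B A) (B z)"
      using order_trans[OF lsub_apply_le[of z UNIV C A'] le_funD[OF assms, of z]] by (simp add: le_infI2)
    also have "\<dots> \<le> A z" by (rule lsub_apply_le) simp
    finally show ?thesis .
  qed
  then show "inf (lsub UNIV C A') (sc_point T B A) \<le> sc_point T C A"
    using A unfolding sc_point_def by (simp add: le_lsub_iff)
qed

lemma llower_approx_ideal: "llower (ptL T) (subO T) (approx_ideal T x :: (('a \<Rightarrow> 'l) \<Rightarrow> 'l) \<Rightarrow> 'l)"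
  unfolding llower_def
proof (intro ballI)
  fix p r assume "p \<in> ptL T" "r \<in> ptL T"
  have "inf (approx_ideal T x p) (subO T r p)
      = (SUP B\<in>SC T. inf (inf (linterior T B x) (subO T p (sc_point T B))) (subO T r p))"
    unfolding approx_ideal_def by (rule frame_SUP_inf_distrib)
  also have "\<dots> \<le> approx_ideal T x r"
    unfolding approx_ideal_def
  proof (rule SUP_subset_mono[OF order_refl])
    fix B
    have "inf (subO T r p) (subO T p (sc_point T B)) \<le> subO T r (sc_point T B)" by (rule subO_trans)
    then show "inf (inf (linterior T B x) (subO T p (sc_point T B))) (subO T r p)
        \<le> inf (linterior T B x) (subO T r (sc_point T B))"
      by (simp add: inf.coboundedI2 inf_commute inf_left_commute)
  qed
  finally show "inf (approx_ideal T x p) (subO T r p) \<le> approx_ideal T x r" .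
qed

lemma pt_join_approx_ideal_le:
  assumes A: "A \<in> T"
  shows "pt_join T (approx_ideal T x) A \<le> (A x :: 'l)"
  unfolding pt_join_def approx_ideal_def frame_SUP_inf_distrib
proof (intro SUP_least)
  fix p B
  let ?M = "inf (inf (linterior T B x) (subO T p (sc_point T B))) (p A)"
  have M: "?M \<le> linterior T B x" "?M \<le> inf (subO T p (sc_point T B)) (p A)"
    by (simp_all add: inf.coboundedI1 inf.coboundedI2)
  have "?M \<le> inf (lsub UNIV B A) (B x)"
  proof (rule le_infI)
    show "?M \<le> lsub UNIV B A" using order_trans[OF M(2) subO_apply_le[OF A]] A by (simp add: sc_point_def)
    show "?M \<le> B x" using order_trans[OF M(1) le_funD[OF linterior_le]] .
  qed
  also have "\<dots> \<le> A x" by (rule lsub_apply_le) simp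
  finally show "?M \<le> A x" .
qed

lemma interior_le_approx_ideal_sc_point:
  assumes "B \<in> SC T"
  shows "linterior T B x \<le> approx_ideal T x (sc_point T (B :: 'a \<Rightarrow> 'l))"
  unfolding approx_ideal_def using assms by (rule SUP_upper2) (simp add: subO_refl)

context
  fixes T :: "('a \<Rightarrow> 'l) set"
  assumes topology: "is_Ltop T"
begin

lemma sc_point_in_ptL:
  assumes "B \<in> SC T"
  shows "sc_point T B \<in> ptL T"
proof -
  have ne: "lnonempty UNIV B" and sc: "\<And>G. G \<subseteq> T \<Longrightarrow> lsub UNIV B (Sup G) = (SUP V\<in>G. lsub UNIV B V)"
    using assms unfolding SC_def super_compact_def by auto
  have "sc_point T B (inf A A') = inf (sc_point T B A) (sc_point T B A')" if "A \<in> T" "A' \<in> T" for A A'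
    using that Ltop_inf_closed[OF topology that] unfolding sc_point_def by (simp add: lsub_inf)
  moreover have "sc_point T B (Sup G) = (SUP A\<in>G. sc_point T B A)" if "G \<subseteq> T" for G
  proof -
    have "sc_point T B (Sup G) = (SUP V\<in>G. lsub UNIV B V)"
      using Ltop_Sup_closed[OF topology that] sc[OF that] unfolding sc_point_def by simp
    also have "\<dots> = (SUP A\<in>G. sc_point T B A)" using that unfolding sc_point_def by (intro SUP_cong) auto
    finally show ?thesis .
  qed
  moreover have "sc_point T B (\<lambda>_. a) = a" for a
    using Ltop_const_open[OF topology] unfolding sc_point_def by (simp add: lsub_const[OF ne])
  moreover have "sc_point T B A = bot" if "A \<notin> T" for A
    using that unfolding sc_point_def by simp
  ultimately show ?thesis unfolding ptL_def is_lpoint_def by blast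
qed

lemma ptL_interior_le_subO_sc_point:
  assumes "p \<in> ptL T"
  shows "p (linterior T B) \<le> subO T (sc_point T B) p"
  unfolding le_subO_iff
proof
  fix A assume A: "A \<in> T"
  let ?c = "lsub UNIV B A" and ?Bo = "linterior T B"
  have opens: "?Bo \<in> T" "(\<lambda>_. ?c) \<in> T" "inf ?Bo (\<lambda>_. ?c) \<in> T"
    using linterior_open Ltop_const_open Ltop_inf_closed topology by blast+
  have "inf ?Bo (\<lambda>_. ?c) \<le> A"
  proof (rule le_funI)
    fix z
    have "inf (?Bo z) ?c \<le> inf ?c (B z)"
      using le_funD[OF linterior_le[of T B]] by (simp add: le_infI1)
    also have "\<dots> \<le> A z" by (rule lsub_apply_le) simp
    finally show "inf ?Bo (\<lambda>_. ?c) z \<le> A z" by simp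
  qed
  then have "p (inf ?Bo (\<lambda>_. ?c)) \<le> p A" by (rule ptL_mono[OF assms opens(3) A])
  moreover have "p (inf ?Bo (\<lambda>_. ?c)) = inf (p ?Bo) ?c"
    using ptL_inf[OF assms opens(1,2)] ptL_const[OF assms] by simp
  ultimately show "inf (p ?Bo) (sc_point T B A) \<le> p A" using A unfolding sc_point_def by simp
qed

lemma interior_le_wbelow_sc_point:
  assumes "B \<in> SC T"
  shows "linterior T B x \<le> wbelow (ptL T) (subO T) (ptx T x) (sc_point T B)"
  unfolding wbelow_def
proof (rule Inf_greatest, clarify)
  fix I s assume I: "lideal (ptL T) (subO T) I" and s: "is_lsup (ptL T) (subO T) I s"
  let ?Bo = "linterior T B"
  have Bo: "?Bo \<in> T" by (rule linterior_open[OF topology])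
  have "s = pt_join T I"
    using I s pt_join_is_lsup is_lsup_ptL_unique unfolding lideal_def by blast
  then have "inf (subO T (ptx T x) s) (?Bo x) \<le> (SUP p\<in>ptL T. inf (I p) (p ?Bo))"
    using subO_apply_le[OF Bo, of "ptx T x" s] Bo unfolding ptx_def pt_join_def by simp
  also have "\<dots> \<le> I (sc_point T B)"
  proof (rule SUP_least)
    fix p assume p: "p \<in> ptL T"
    have "inf (I p) (p ?Bo) \<le> inf (I p) (subO T (sc_point T B) p)"
      using ptL_interior_le_subO_sc_point[OF p] by (rule inf_mono[OF order_refl])
    also have "\<dots> \<le> I (sc_point T B)"
      using I p sc_point_in_ptL[OF assms] unfolding lideal_def llower_def by blast
    finally show "inf (I p) (p ?Bo) \<le> I (sc_point T B)" .
  qed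
  finally show "?Bo x \<le> limp (subO T (ptx T x) s) (I (sc_point T B))"
    by (simp add: le_limp_iff inf_commute)
qed

context
  assumes lsc: "locally_super_compact T"
begin

lemma lnonempty_approx_ideal: "lnonempty (ptL T) (approx_ideal T x)"
  unfolding lnonempty_def
proof (rule top_unique[THEN iffD1])
  from locally_super_compact_apply[OF lsc Ltop_const_open[OF topology], of top x]
  have "top = (SUP B\<in>SC T. inf (lsub UNIV B (\<lambda>_. top)) (linterior T B x))" by simp
  also have "\<dots> \<le> (SUP B\<in>SC T. approx_ideal T x (sc_point T B))"
  proof (rule SUP_subset_mono[OF order_refl])
    fix B assume "B \<in> SC T"
    then show "inf (lsub UNIV B (\<lambda>_. top)) (linterior T B x) \<le> approx_ideal T x (sc_point T B)"
      by (rule inf.coboundedI2[OF interior_le_approx_ideal_sc_point])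
  qed
  also have "\<dots> \<le> (SUP p\<in>ptL T. approx_ideal T x p)"
    by (rule SUP_mono) (use sc_point_in_ptL in blast)
  finally show "top \<le> (SUP p\<in>ptL T. approx_ideal T x p)" .
qed

text \<open>q_C is a common upper bound of q_B and q_B' for super-compact C covering B\<degree> \<and> B'\<degree>.\<close>

lemma approx_ideal_upper_bound:
  assumes "C \<in> SC T"
  shows "inf (inf (lsub UNIV C (inf (linterior T B) (linterior T B'))) (linterior T C x))
           (inf (subO T p (sc_point T B)) (subO T q (sc_point T B')))
         \<le> inf (inf (approx_ideal T x (sc_point T C)) (subO T p (sc_point T C))) (subO T q (sc_point T C))"
    (is "inf (inf ?c _) _ \<le> _")
proof -
  let ?L = "inf (inf ?c (linterior T C x)) (inf (subO T p (sc_point T B)) (subO T q (sc_point T B')))"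
  have L: "?L \<le> ?c" "?L \<le> linterior T C x" "?L \<le> subO T p (sc_point T B)" "?L \<le> subO T q (sc_point T B')"
    by (simp_all add: inf.coboundedI1 inf.coboundedI2)
  have "?c \<le> subO T (sc_point T B) (sc_point T C)"
    by (rule lsub_le_subO_sc_point) (rule order_trans[OF inf_le1 linterior_le])
  then have "?L \<le> subO T p (sc_point T C)"
    using order_trans[OF le_infI[OF L(3) order_trans[OF L(1)]] subO_trans] by blast
  moreover have "?c \<le> subO T (sc_point T B') (sc_point T C)"
    by (rule lsub_le_subO_sc_point) (rule order_trans[OF inf_le2 linterior_le])
  then have "?L \<le> subO T q (sc_point T C)"
    using order_trans[OF le_infI[OF L(4) order_trans[OF L(1)]] subO_trans] by blast
  moreover have "?L \<le> approx_ideal T x (sc_point T C)"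
    using order_trans[OF L(2) interior_le_approx_ideal_sc_point[OF assms]] .
  ultimately show ?thesis by simp
qed

lemma ldirected_approx_ideal: "ldirected (ptL T) (subO T) (approx_ideal T x)"
  unfolding ldirected_def
proof (intro conjI ballI lnonempty_approx_ideal)
  fix p q
  let ?J = "approx_ideal T x"
  have "inf (?J p) (?J q) = (SUP B\<in>SC T. SUP B'\<in>SC T.
      inf (inf (linterior T B x) (subO T p (sc_point T B))) (inf (linterior T B' x) (subO T q (sc_point T B'))))"
    unfolding approx_ideal_def by (simp add: frame_SUP_inf_distrib frame_inf_SUP_distrib) (rule SUP_commute)
  also have "\<dots> \<le> (SUP z\<in>ptL T. inf (inf (?J z) (subO T p z)) (subO T q z))"
  proof (intro SUP_least)
    fix B B' assume "B \<in> SC T" "B' \<in> SC T"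
    let ?A = "inf (linterior T B) (linterior T B')"
    have "?A \<in> T" using Ltop_inf_closed[OF topology] linterior_open[OF topology] by blast
    have "inf (inf (linterior T B x) (subO T p (sc_point T B))) (inf (linterior T B' x) (subO T q (sc_point T B')))
        = inf (?A x) (inf (subO T p (sc_point T B)) (subO T q (sc_point T B')))"
      by (simp add: inf_aci)
    also have "\<dots> = (SUP C\<in>SC T. inf (inf (lsub UNIV C ?A) (linterior T C x))
        (inf (subO T p (sc_point T B)) (subO T q (sc_point T B'))))"
      by (subst locally_super_compact_apply[OF lsc \<open>?A \<in> T\<close>, of x]) (rule frame_SUP_inf_distrib)
    also have "\<dots> \<le> (SUP z\<in>ptL T. inf (inf (?J z) (subO T p z)) (subO T q z))"
    proof (rule SUP_mono)
      fix C assume C: "C \<in> SC T"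
      show "\<exists>z\<in>ptL T. inf (inf (lsub UNIV C ?A) (linterior T C x))
          (inf (subO T p (sc_point T B)) (subO T q (sc_point T B'))) \<le> inf (inf (?J z) (subO T p z)) (subO T q z)"
        using approx_ideal_upper_bound[OF C, of B B' x p q] sc_point_in_ptL[OF C] by (rule bexI)
    qed
    finally show "inf (inf (linterior T B x) (subO T p (sc_point T B)))
        (inf (linterior T B' x) (subO T q (sc_point T B')))
        \<le> (SUP z\<in>ptL T. inf (inf (?J z) (subO T p z)) (subO T q z))" .
  qed
  finally show "inf (?J p) (?J q) \<le> (SUP z\<in>ptL T. inf (inf (?J z) (subO T p z)) (subO T q z))" .
qed

lemma lideal_approx_ideal: "lideal (ptL T) (subO T) (approx_ideal T x)"
  unfolding lideal_def by (intro conjI ldirected_approx_ideal llower_approx_ideal)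

lemma pt_join_approx_ideal: "pt_join T (approx_ideal T x) = ptx T x"
proof (rule ext)
  fix A
  show "pt_join T (approx_ideal T x) A = ptx T x A"
  proof (cases "A \<in> T")
    case False
    then show ?thesis
      using ptL_apply_nonopen[OF pt_join_in_ptL[OF ldirected_approx_ideal]] unfolding ptx_def by simp
  next
    case A: True
    have qB: "sc_point T B A = lsub UNIV B A" for B using A by (simp add: sc_point_def)
    have "pt_join T (approx_ideal T x) A \<le> A x" by (rule pt_join_approx_ideal_le[OF A])
    moreover have "A x \<le> pt_join T (approx_ideal T x) A"
    proof -
      have "A x = (SUP B\<in>SC T. inf (lsub UNIV B A) (linterior T B x))"
        by (rule locally_super_compact_apply[OF lsc A])
      also have "\<dots> \<le> (SUP B\<in>SC T. inf (approx_ideal T x (sc_point T B)) (sc_point T B A))"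
      proof (rule SUP_subset_mono[OF order_refl])
        fix B assume "B \<in> SC T"
        then show "inf (lsub UNIV B A) (linterior T B x) \<le> inf (approx_ideal T x (sc_point T B)) (sc_point T B A)"
          using interior_le_approx_ideal_sc_point[of B T x] by (simp add: qB le_infI2)
      qed
      also have "\<dots> \<le> pt_join T (approx_ideal T x) A"
        unfolding pt_join_def by (rule SUP_mono) (use sc_point_in_ptL in blast)
      finally show ?thesis .
    qed
    ultimately show ?thesis using A unfolding ptx_def by simp
  qed
qed

lemma wbelow_ptx_eq_approx_ideal:
  assumes "p \<in> ptL T"
  shows "wbelow (ptL T) (subO T) (ptx T x) p = approx_ideal T x p"
proof (rule order.antisym)
  have "is_lsup (ptL T) (subO T) (approx_ideal T x) (ptx T x)"
    using pt_join_is_lsup[OF ldirected_approx_ideal] unfolding pt_join_approx_ideal .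
  then have "wbelow (ptL T) (subO T) (ptx T x) p \<le> limp (subO T (ptx T x) (ptx T x)) (approx_ideal T x p)"
    unfolding wbelow_def using lideal_approx_ideal by (intro Inf_lower) blast
  then show "wbelow (ptL T) (subO T) (ptx T x) p \<le> approx_ideal T x p"
    by (simp add: subO_refl limp_top_left)
  show "approx_ideal T x p \<le> wbelow (ptL T) (subO T) (ptx T x) p"
    unfolding approx_ideal_def
  proof (rule SUP_least)
    fix B assume "B \<in> SC T"
    have "inf (linterior T B x) (subO T p (sc_point T B))
        \<le> inf (wbelow (ptL T) (subO T) (ptx T x) (sc_point T B)) (subO T p (sc_point T B))"
      using interior_le_wbelow_sc_point[OF \<open>B \<in> SC T\<close>] by (rule inf_mono) simp
    also have "\<dots> \<le> wbelow (ptL T) (subO T) (ptx T x) p"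
      using llower_wbelow[of "ptL T" "subO T" "ptx T x"] assms sc_point_in_ptL[OF \<open>B \<in> SC T\<close>]
      unfolding llower_def by blast
    finally show "inf (linterior T B x) (subO T p (sc_point T B)) \<le> wbelow (ptL T) (subO T) (ptx T x) p" .
  qed
qed

end

end

end

theorem proposition4p5:
  fixes T :: "('a \<Rightarrow> 'l::complete_lattice) set" and x :: 'a
  assumes "is_frame TYPE('l)"
    and "is_Ltop T"
    and "locally_super_compact T"
  shows "ldirected (ptL T) (subO T) (wbelow (ptL T) (subO T) (ptx T x))
       \<and> is_lsup (ptL T) (subO T) (wbelow (ptL T) (subO T) (ptx T x)) (ptx T x)"
proof -
  have wbelow_eq: "\<And>p. p \<in> ptL T \<Longrightarrow> wbelow (ptL T) (subO T) (ptx T x) p = approx_ideal T x p"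
    using wbelow_ptx_eq_approx_ideal[OF assms] .
  have "ldirected (ptL T) (subO T) (approx_ideal T x)"
    using ldirected_approx_ideal[OF assms] .
  moreover have "is_lsup (ptL T) (subO T) (approx_ideal T x) (ptx T x)"
    using pt_join_is_lsup[OF assms(1) calculation] pt_join_approx_ideal[OF assms] by simp
  ultimately show ?thesis
    using ldirected_cong[of "ptL T" "wbelow (ptL T) (subO T) (ptx T x)", OF wbelow_eq]
      is_lsup_cong[of "ptL T" "wbelow (ptL T) (subO T) (ptx T x)", OF wbelow_eq] by simp
qed

end
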